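(* Let $G$ and $L$ be topological groups with $G$ a Baire space, and let $H$ be a first countable convergence group. Then every separately continuous bihomomorphism $u: G\times H\to L$ is jointly continuous (with respect to the product convergence structure on $G\times H$).
   Context: All groups are abelian. A convergence structure on a set $X$ assigns to each $x$ a collection of filters converging to $x$. This assignment must satisfy three conditions: point ultrafilters converge to their point; finite intersections of filters converging to $x$ converge to $x$; and finer filters of convergent filters converge. A map is continuous if it sends filters converging to $x$ to filters converging to the image of $x$. A convergence group is an abelian group with a convergence structure such that $\mathcal F\to x$, $\mathcal G\to y$ imply $\mathcal F-\mathcal G\to x-y$. Topological groups are convergence groups, with convergent filters being those finer than the neighbourhood filter. In the product convergence structure, a filter converges iff its projections converge. A convergence space is first countable if for every filter $\mathcal F\to x$ there is a filter $\mathcal V\subseteq\mathcal F$ with a countable base such that $\mathcal V\to x$. A bihomomorphism is a map that is a homomorphism in each variable. It is separately continuous if it is continuous in each variable separately. *)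

theory Defs
  imports "HOL-Analysis.Analysis"
begin

definition convergence_space :: "('a filter \<Rightarrow> 'a \<Rightarrow> bool) \<Rightarrow> bool" where
  "convergence_space conv \<longleftrightarrow>
     (\<forall>x. conv (principal {x}) x) \<and>
     (\<forall>F G x. conv F x \<and> conv G x \<longrightarrow> conv (sup F G) x) \<and>
     (\<forall>F G x. F \<le> G \<and> conv G x \<longrightarrow> conv F x)"

definition convergence_group :: "('a::ab_group_add filter \<Rightarrow> 'a \<Rightarrow> bool) \<Rightarrow> bool" where
  "convergence_group conv \<longleftrightarrow> convergence_space conv \<and>
     (\<forall>F G x y. conv F x \<and> conv G y \<longrightarrow>
        conv (filtermap (\<lambda>(a, b). a - b) (F \<times>\<^sub>F G)) (x - y))"

definition top_conv :: "'a::topological_space filter \<Rightarrow> 'a \<Rightarrow> bool" where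
  "top_conv F x \<longleftrightarrow> F \<le> nhds x"

definition prod_conv ::
  "('a filter \<Rightarrow> 'a \<Rightarrow> bool) \<Rightarrow> ('b filter \<Rightarrow> 'b \<Rightarrow> bool) \<Rightarrow> ('a \<times> 'b) filter \<Rightarrow> 'a \<times> 'b \<Rightarrow> bool" where
  "prod_conv cA cB F p \<longleftrightarrow> cA (filtermap fst F) (fst p) \<and> cB (filtermap snd F) (snd p)"

definition conv_continuous ::
  "('a filter \<Rightarrow> 'a \<Rightarrow> bool) \<Rightarrow> ('b filter \<Rightarrow> 'b \<Rightarrow> bool) \<Rightarrow> ('a \<Rightarrow> 'b) \<Rightarrow> bool" where
  "conv_continuous cA cB f \<longleftrightarrow> (\<forall>F x. cA F x \<longrightarrow> cB (filtermap f F) (f x))"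

definition countable_base_filter :: "'a filter \<Rightarrow> bool" where
  "countable_base_filter V \<longleftrightarrow>
     (\<exists>B. countable B \<and> (\<forall>P. eventually P V \<longleftrightarrow> (\<exists>b\<in>B. \<forall>x\<in>b. P x)))"

definition first_countable_conv :: "('a filter \<Rightarrow> 'a \<Rightarrow> bool) \<Rightarrow> bool" where
  "first_countable_conv conv \<longleftrightarrow>
     (\<forall>F x. conv F x \<longrightarrow> (\<exists>V. F \<le> V \<and> countable_base_filter V \<and> conv V x))"

definition baire_space :: "'a::topological_space itself \<Rightarrow> bool" where
  "baire_space _ \<longleftrightarrow>
     (\<forall>\<F>::'a set set. countable \<F> \<and> (\<forall>S\<in>\<F>. open S \<and> closure S = UNIV) \<longrightarrow>
        closure (\<Inter>\<F>) = UNIV)"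

definition bihomomorphism :: "('a::ab_group_add \<Rightarrow> 'b::ab_group_add \<Rightarrow> 'c::ab_group_add) \<Rightarrow> bool" where
  "bihomomorphism u \<longleftrightarrow>
     (\<forall>a a' b. u (a + a') b = u a b + u a' b) \<and> (\<forall>a b b'. u a (b + b') = u a b + u a b')"

end

theory Submission
  imports Defs
begin

text \<open>
  Proof idea (a Banach--Steinhaus argument).  Let a filter on \<open>G \<times> H\<close> have projections
  converging to \<open>g0\<close> and \<open>h0\<close>.  Since \<open>u\<close> is biadditive,
    \<open>u g h = u (g - g0) (h - h0) + u g h0 + u g0 h - u g0 h0\<close>,
  and the last three terms converge by separate continuity, so it suffices to prove
  joint continuity at \<open>(0, 0)\<close>.  There we replace the filter converging to \<open>0\<close> in \<open>H\<close>
  by a coarser one \<open>V\<close> with a countable base (first countability).  For a small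
  neighbourhood \<open>N\<close> of \<open>0\<close> in \<open>L\<close>, the closed sets \<open>{g. u g ` b \<subseteq> closure N}\<close>, \<open>b\<close> in the
  base, cover \<open>G\<close>; by the Baire property one of them has an interior point \<open>g1\<close>, and
  translating by \<open>g1\<close> yields the equicontinuity statement: \<open>u U b \<subseteq> W\<close> for a neighbourhood
  \<open>U\<close> of \<open>0\<close> and some \<open>b\<close> in the base.
\<close>

lemma open_square_nhds_zero:
  fixes f :: "'a::{topological_space, zero} \<Rightarrow> 'a \<Rightarrow> 'b::{topological_space, zero}"
  assumes f: "((\<lambda>p. f (fst p) (snd p)) \<longlongrightarrow> 0) (nhds (0::'a) \<times>\<^sub>F nhds 0)"
    and W: "open W" "0 \<in> W"
  shows "\<exists>N. open N \<and> 0 \<in> N \<and> (\<forall>a\<in>N. \<forall>b\<in>N. f a b \<in> W)"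
proof -
  have "eventually (\<lambda>p. f (fst p) (snd p) \<in> W) (nhds 0 \<times>\<^sub>F nhds 0)"
    using topological_tendstoD[OF f W] .
  then obtain Q where Q: "eventually Q (nhds 0)" "\<And>a b. Q a \<Longrightarrow> Q b \<Longrightarrow> f a b \<in> W"
    unfolding eventually_prod_same by auto
  from Q(1) obtain N where "open N" "0 \<in> N" "\<forall>a\<in>N. Q a"
    unfolding eventually_nhds by auto
  with Q(2) show ?thesis by blast
qed

lemma small_nhds_zero:
  fixes W :: "'l::topological_ab_group_add set"
  assumes "open W" "0 \<in> W"
  shows "\<exists>N. open N \<and> 0 \<in> N \<and> (\<forall>a\<in>N. \<forall>b\<in>N. \<forall>c\<in>N. \<forall>d\<in>N. (a + b) - (c + d) \<in> W)"
proof -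
  have "((\<lambda>p. fst p - snd p) \<longlongrightarrow> (0::'l) - 0) (nhds 0 \<times>\<^sub>F nhds 0)"
    by (intro tendsto_diff filterlim_fst filterlim_snd)
  then have diff: "((\<lambda>p. fst p - snd p) \<longlongrightarrow> (0::'l)) (nhds 0 \<times>\<^sub>F nhds 0)" by simp
  have "((\<lambda>p. fst p + snd p) \<longlongrightarrow> (0::'l) + 0) (nhds 0 \<times>\<^sub>F nhds 0)"
    by (intro tendsto_add filterlim_fst filterlim_snd)
  then have add: "((\<lambda>p. fst p + snd p) \<longlongrightarrow> (0::'l)) (nhds 0 \<times>\<^sub>F nhds 0)" by simp
  obtain M where M: "open M" "0 \<in> M" "\<forall>x\<in>M. \<forall>y\<in>M. x - y \<in> W"
    using open_square_nhds_zero[OF diff assms] by blast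
  obtain N where "open N" "0 \<in> N" "\<forall>a\<in>N. \<forall>b\<in>N. a + b \<in> M"
    using open_square_nhds_zero[OF add M(1,2)] by blast
  with M(3) show ?thesis by blast
qed

lemma closure_subset_sums:
  fixes N :: "'l::topological_ab_group_add set"
  assumes N: "open N" "0 \<in> N" and z: "z \<in> closure N"
  shows "\<exists>a\<in>N. \<exists>c\<in>N. z = a + c"
proof -
  have "open ((\<lambda>w. z - w) -` N)"
    using continuous_on_open_vimage[of UNIV "\<lambda>w. z - w"] N(1)
    by (simp add: continuous_on_diff)
  moreover have "z \<in> (\<lambda>w. z - w) -` N" using N(2) by simp
  ultimately have "N \<inter> (\<lambda>w. z - w) -` N \<noteq> {}"
    using z unfolding closure_iff_nhds_not_empty by blast
  then obtain w where "w \<in> N" "z - w \<in> N" by auto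
  then show ?thesis by (intro bexI[of _ w] bexI[of _ "z - w"]) auto
qed

lemma baire_closed_cover:
  assumes baire: "baire_space TYPE('a::topological_space)"
    and "countable B" and closed: "\<And>b. b \<in> B \<Longrightarrow> closed (E b :: 'a set)"
    and cover: "\<And>x. \<exists>b\<in>B. x \<in> E b"
  shows "\<exists>b\<in>B. interior (E b) \<noteq> {}"
proof (rule ccontr)
  assume no_interior: "\<not> ?thesis"
  let ?D = "(\<lambda>b. - E b) ` B"
  have "open (- E b) \<and> closure (- E b) = UNIV" if "b \<in> B" for b
    using no_interior closed[OF that] that by (simp add: closure_interior open_Compl)
  moreover have "countable ?D" using \<open>countable B\<close> by simp
  ultimately have "closure (\<Inter>?D) = UNIV"
    using baire unfolding baire_space_def by blast
  moreover have "\<Inter>?D = {}" using cover by auto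
  ultimately show False by simp
qed

lemma bihomomorphism_zero_right:
  assumes "bihomomorphism u" shows "u g 0 = 0"
proof -
  have "u g (0 + 0) = u g 0 + u g 0" using assms unfolding bihomomorphism_def by blast
  then show ?thesis by simp
qed

lemma bihomomorphism_add_left:
  assumes "bihomomorphism u" shows "u (a + a') y = u a y + u a' y"
  using assms unfolding bihomomorphism_def by blast

lemma bihomomorphism_expand:
  assumes "bihomomorphism u"
  shows "u a b = u (a - a0) (b - b0) + u a b0 + u a0 b - u a0 b0"
proof -
  have add1: "u (x + x') y = u x y + u x' y" and add2: "u x (y + y') = u x y + u x y'"
    for x x' y y' using assms unfolding bihomomorphism_def by auto
  have left: "u (a - a0) y = u a y - u a0 y" for y
    using add1[of "a - a0" a0 y] by (simp add: eq_diff_eq)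
  have right: "u x (b - b0) = u x b - u x b0" for x
    using add2[of x "b - b0" b0] by (simp add: eq_diff_eq)
  show ?thesis by (simp add: left right)
qed

lemma convergence_group_translate:
  assumes grp: "convergence_group conv" and F: "conv F x"
  shows "conv (filtermap (\<lambda>y. y - x) F) 0"
proof -
  have point: "conv (principal {x}) x"
    using grp unfolding convergence_group_def convergence_space_def by simp
  have "\<forall>F G x y. conv F x \<and> conv G y \<longrightarrow>
      conv (filtermap (\<lambda>(a, b). a - b) (F \<times>\<^sub>F G)) (x - y)"
    using grp unfolding convergence_group_def by simp
  then have "conv (filtermap (\<lambda>(a, b). a - b) (F \<times>\<^sub>F principal {x})) (x - x)"
    using F point by blast
  then show ?thesis by (simp add: prod_filter_principal_singleton2 filtermap_filtermap)
qed

lemma conv_continuous_tendsto: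
  assumes "conv_continuous conv top_conv f" and "conv (filtermap \<phi> F) x"
  shows "((\<lambda>y. f (\<phi> y)) \<longlongrightarrow> f x) F"
proof -
  have "filtermap f (filtermap \<phi> F) \<le> nhds (f x)"
    using assms unfolding conv_continuous_def top_conv_def by blast
  then show ?thesis by (simp add: filterlim_def filtermap_filtermap)
qed

lemma conv_continuous_top_conv_imp_continuous:
  assumes "conv_continuous top_conv top_conv f"
  shows "continuous_on UNIV f"
  unfolding continuous_on_def
proof
  fix x
  have "(f \<longlongrightarrow> f x) (nhds x)"
    using assms unfolding conv_continuous_def top_conv_def filterlim_def by auto
  then show "(f \<longlongrightarrow> f x) (at x within UNIV)"
    by (rule tendsto_mono[rotated]) (simp add: at_within_def)
qed

lemma bihomomorphism_tendsto_split:
  fixes u :: "'g::ab_group_add \<Rightarrow> 'h::ab_group_add \<Rightarrow> 'l::topological_ab_group_add"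
  assumes bh: "bihomomorphism u"
    and zero: "((\<lambda>x. u (\<phi> x - g0) (\<psi> x - h0)) \<longlongrightarrow> 0) F"
    and left: "((\<lambda>x. u (\<phi> x) h0) \<longlongrightarrow> u g0 h0) F"
    and right: "((\<lambda>x. u g0 (\<psi> x)) \<longlongrightarrow> u g0 h0) F"
  shows "((\<lambda>x. u (\<phi> x) (\<psi> x)) \<longlongrightarrow> u g0 h0) F"
proof -
  have "((\<lambda>x. u (\<phi> x - g0) (\<psi> x - h0) + u (\<phi> x) h0 + u g0 (\<psi> x) - u g0 h0)
      \<longlongrightarrow> 0 + u g0 h0 + u g0 h0 - u g0 h0) F"
    by (intro tendsto_intros zero left right)
  moreover have "u (\<phi> x - g0) (\<psi> x - h0) + u (\<phi> x) h0 + u g0 (\<psi> x) - u g0 h0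
      = u (\<phi> x) (\<psi> x)" for x
    by (rule bihomomorphism_expand[OF bh, symmetric])
  ultimately show ?thesis by simp
qed

lemma baire_equicontinuity:
  fixes u :: "'g::topological_ab_group_add \<Rightarrow> 'h \<Rightarrow> 'l::topological_ab_group_add"
  assumes baire: "baire_space TYPE('g)"
    and add: "\<And>a a' y. u (a + a') y = u a y + u a' y"
    and cont: "\<And>y. continuous_on UNIV (\<lambda>g. u g y)"
    and V: "countable_base_filter V"
    and lim: "\<And>g. (u g \<longlongrightarrow> 0) V"
    and W: "open W" "0 \<in> W"
  shows "\<exists>U. open U \<and> 0 \<in> U \<and> eventually (\<lambda>y. \<forall>g\<in>U. u g y \<in> W) V"
proof -
  obtain N where N: "open N" "0 \<in> N" "\<forall>a\<in>N. \<forall>b\<in>N. \<forall>c\<in>N. \<forall>d\<in>N. (a + b) - (c + d) \<in> W"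
    using small_nhds_zero[OF W] by blast
  from V obtain B where B: "countable B" "\<And>P. eventually P V \<longleftrightarrow> (\<exists>b\<in>B. \<forall>y\<in>b. P y)"
    unfolding countable_base_filter_def by blast
  define E where "E b = {g. \<forall>y\<in>b. u g y \<in> closure N}" for b
  have "closed (E b)" for b
  proof -
    have "E b = (\<Inter>y\<in>b. (\<lambda>g. u g y) -` closure N)" by (auto simp: E_def)
    moreover have "closed ((\<lambda>g. u g y) -` closure N)" for y
      using continuous_on_closed_vimage[of UNIV "\<lambda>g. u g y"] cont by simp
    ultimately show ?thesis by auto
  qed
  moreover have "\<exists>b\<in>B. g \<in> E b" for g
  proof -
    have "eventually (\<lambda>y. u g y \<in> N) V" using topological_tendstoD[OF lim N(1,2)] .
    then obtain b where "b \<in> B" "\<forall>y\<in>b. u g y \<in> N" using B(2) by blast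
    then show ?thesis using closure_subset unfolding E_def by blast
  qed
  ultimately obtain b g1 where b: "b \<in> B" "g1 \<in> interior (E b)"
    using baire_closed_cover[OF baire B(1)] by blast
  define U where "U = (\<lambda>g. g1 + g) -` interior (E b)"
  have "open U"
    using continuous_on_open_vimage[of UNIV "\<lambda>g. g1 + g"] unfolding U_def
    by (simp add: continuous_on_add)
  moreover have "0 \<in> U" using b by (simp add: U_def)
  moreover have small: "u g y \<in> W" if "g \<in> U" "y \<in> b" for g y
  proof -
    have "u (g1 + g) y \<in> closure N" "u g1 y \<in> closure N"
      using that b interior_subset unfolding U_def E_def by blast+
    then obtain a1 a2 c1 c2 where "a1 \<in> N" "a2 \<in> N" "c1 \<in> N" "c2 \<in> N"
      "u (g1 + g) y = a1 + a2" "u g1 y = c1 + c2"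
      using closure_subset_sums[OF N(1,2)] by meson
    moreover have "u g y = u (g1 + g) y - u g1 y" using add[of g1 g y] by simp
    ultimately show ?thesis using N(3) by auto
  qed
  moreover have "eventually (\<lambda>y. y \<in> b) V" using B(2) b(1) by blast
  then have "eventually (\<lambda>y. \<forall>g\<in>U. u g y \<in> W) V"
    by (rule eventually_mono) (use small in blast)
  ultimately show ?thesis by blast
qed

lemma bihomomorphism_tendsto_zero:
  fixes u :: "'g::topological_ab_group_add \<Rightarrow> 'h::ab_group_add \<Rightarrow> 'l::topological_ab_group_add"
  assumes baire: "baire_space TYPE('g)"
    and fc: "first_countable_conv convH"
    and bh: "bihomomorphism u"
    and cont_left: "\<And>y. continuous_on UNIV (\<lambda>g. u g y)"
    and cont_right: "\<And>g. conv_continuous convH top_conv (u g)"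
    and \<phi>: "(\<phi> \<longlongrightarrow> 0) F"
    and \<psi>: "convH (filtermap \<psi> F) 0"
  shows "((\<lambda>x. u (\<phi> x) (\<psi> x)) \<longlongrightarrow> 0) F"
proof (rule topological_tendstoI)
  fix W :: "'l set" assume W: "open W" "0 \<in> W"
  from fc \<psi> obtain V where V: "filtermap \<psi> F \<le> V" "countable_base_filter V" "convH V 0"
    unfolding first_countable_conv_def by blast
  have lim_V: "(u g \<longlongrightarrow> 0) V" for g
  proof -
    have "top_conv (filtermap (u g) V) (u g 0)"
      using cont_right[of g] V(3) unfolding conv_continuous_def by simp
    then show ?thesis
      by (simp add: bihomomorphism_zero_right[OF bh] top_conv_def filterlim_def)
  qed
  obtain U where U: "open U" "0 \<in> U" "eventually (\<lambda>y. \<forall>g\<in>U. u g y \<in> W) V"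
    using baire_equicontinuity[OF baire bihomomorphism_add_left[OF bh] cont_left V(2) lim_V W]
    by blast
  have "eventually (\<lambda>x. \<phi> x \<in> U) F" using topological_tendstoD[OF \<phi> U(1,2)] .
  moreover have "eventually (\<lambda>x. \<forall>g\<in>U. u g (\<psi> x) \<in> W) F"
    using filter_leD[OF V(1) U(3)] by (simp add: eventually_filtermap)
  ultimately show "eventually (\<lambda>x. u (\<phi> x) (\<psi> x) \<in> W) F"
    by (rule eventually_elim2) blast
qed

theorem proposition3p4:
  fixes u :: "'g::topological_ab_group_add \<Rightarrow> 'h::ab_group_add \<Rightarrow> 'l::topological_ab_group_add"
    and convH :: "'h filter \<Rightarrow> 'h \<Rightarrow> bool"
  assumes "baire_space TYPE('g)"
    and "convergence_group convH"
    and "first_countable_conv convH"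
    and "bihomomorphism u"
    and "\<forall>h. conv_continuous top_conv top_conv (\<lambda>g. u g h)"
    and "\<forall>g. conv_continuous convH top_conv (u g)"
  shows "conv_continuous (prod_conv top_conv convH) top_conv (\<lambda>(g, h). u g h)"
  unfolding conv_continuous_def prod_conv_def
proof (intro allI impI, elim conjE)
  fix F :: "('g \<times> 'h) filter" and p :: "'g \<times> 'h"
  obtain g0 h0 where p: "p = (g0, h0)" by fastforce
  assume conv_fst: "top_conv (filtermap fst F) (fst p)"
    and conv_snd: "convH (filtermap snd F) (snd p)"
  have left: "((\<lambda>x. u (fst x) h0) \<longlongrightarrow> u g0 h0) F"
    using conv_continuous_tendsto[OF spec[OF assms(5)] conv_fst] by (simp add: p)
  have right: "((\<lambda>x. u g0 (snd x)) \<longlongrightarrow> u g0 h0) F"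
    using conv_continuous_tendsto[OF spec[OF assms(6)] conv_snd] by (simp add: p)
  have "((\<lambda>x. u (fst x - g0) (snd x - h0)) \<longlongrightarrow> 0) F"
  proof (rule bihomomorphism_tendsto_zero[OF assms(1,3,4)])
    show "continuous_on UNIV (\<lambda>g. u g y)" for y
      using assms(5) conv_continuous_top_conv_imp_continuous by blast
    have "(fst \<longlongrightarrow> g0) F" using conv_fst by (simp add: p top_conv_def filterlim_def)
    from tendsto_diff[OF this tendsto_const[of g0]]
    show "((\<lambda>x. fst x - g0) \<longlongrightarrow> 0) F" by simp
    show "convH (filtermap (\<lambda>x. snd x - h0) F) 0"
      using convergence_group_translate[OF assms(2) conv_snd] by (simp add: p filtermap_filtermap)
  qed (use assms(6) in blast)
  then have "((\<lambda>x. u (fst x) (snd x)) \<longlongrightarrow> u g0 h0) F"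
    using bihomomorphism_tendsto_split[OF assms(4) _ left right] by blast
  then show "top_conv (filtermap (\<lambda>(g, h). u g h) F) ((\<lambda>(g, h). u g h) p)"
    by (simp add: p top_conv_def filterlim_def case_prod_unfold)
qed

end
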